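(* (a) Let $B^L$ be a segment of the left boundary of $S_{slit}$ (oriented either way), and suppose $K_1$ extends continuously to $B^L$ with $K_1(z_1)\in e^{-i\pi/4}\mathbb R$ for all $z_1\in B^L$. Then for every $z_2\in S_{slit}$, $$\int_{B^L}\big(\mathcal K^{\circ\circ}_{K_1,K_2}(z_1,z_2)\,dz_1+\mathcal K^{\bullet\circ}_{K_1,K_2}(z_1,z_2)\,d\bar z_1\big)=0,\qquad\int_{B^L}\big(\mathcal K^{\circ\bullet}_{K_1,K_2}(z_1,z_2)\,dz_1+\mathcal K^{\bullet\bullet}_{K_1,K_2}(z_1,z_2)\,d\bar z_1\big)=0.$$ (b) Let $B^R$ be a segment of the right boundary of $S_{slit}$, and suppose $K_1$ extends continuously to $B^R$ with $K_1(z_1)\in e^{i\pi/4}\mathbb R$ for all $z_1\in B^R$. Then for every $z_2\in S_{slit}$ the same two integrals over $B^R$ vanish.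
   Context: $S=\{z\in\mathbb C:-\frac12<\mathrm{Re}\,z<\frac12\}$ and $S_{slit}=S\setminus\{iy:y\le0\}$. Each point $iy$, $y<0$, of the slit gives two prime ends $0^-+iy$ (seen from $\mathrm{Re}\,z<0$) and $0^++iy$ (seen from $\mathrm{Re}\,z>0$). The left boundary of $S_{slit}$ is $\{-\frac12+iy:y\in\mathbb R\}\cup\{0^++iy:y<0\}$ and the right boundary is $\{\frac12+iy:y\in\mathbb R\}\cup\{0^-+iy:y<0\}$. $\varphi:S_{slit}\to\mathbb H$ is the conformal map onto the upper half-plane sending the top extremity ($\mathrm{Im}\,z\to+\infty$) to $\infty$, the bottom-left extremity to $-\frac12$ and the bottom-right extremity to $+\frac12$ (explicitly $\varphi(z)=\frac12\sqrt{1-e^{-2\pi iz}}$ for a suitable branch); it extends analytically to the boundary arcs. Fix a continuous branch of $\sqrt{\varphi'}$. For functions $K_1,K_2$ defined at $z_1,z_2$ respectively (bars denote complex conjugation): $\mathcal K^{\circ\circ}_{K_1,K_2}(z_1,z_2)=\frac{K_1(z_1)\sqrt{\varphi'(z_1)}\,K_2(z_2)\sqrt{\varphi'(z_2)}}{\varphi(z_1)-\varphi(z_2)}$, $\mathcal K^{\circ\bullet}_{K_1,K_2}=\frac{K_1(z_1)\sqrt{\varphi'(z_1)}\,\overline{K_2(z_2)\sqrt{\varphi'(z_2)}}}{\varphi(z_1)-\overline{\varphi(z_2)}}$, $\mathcal K^{\bullet\circ}_{K_1,K_2}=\frac{\overline{K_1(z_1)\sqrt{\varphi'(z_1)}}\,K_2(z_2)\sqrt{\varphi'(z_2)}}{\overline{\varphi(z_1)}-\varphi(z_2)}$,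 $\mathcal K^{\bullet\bullet}_{K_1,K_2}=\frac{\overline{K_1(z_1)\sqrt{\varphi'(z_1)}}\,\overline{K_2(z_2)\sqrt{\varphi'(z_2)}}}{\overline{\varphi(z_1)}-\overline{\varphi(z_2)}}$. *)

theory Defs
  imports "HOL-Analysis.Analysis"
begin

definition S_slit :: "complex set" where
  "S_slit = {z. - 1/2 < Re z \<and> Re z < 1/2} - {z. Re z = 0 \<and> Im z \<le> 0}"

text \<open>The conformal map phi : S_slit -> H, phi(z) = 1/2 sqrt(1 - e^(-2 pi i z)),
  with the branch of the square root taking values in the upper half plane
  (written via the principal square root: i * csqrt(e^(-2 pi i z) - 1)).\<close>
definition phi :: "complex \<Rightarrow> complex" where
  "phi z = (1/2) * (\<i> * csqrt (exp (- 2 * of_real pi * \<i> * z) - 1))"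

text \<open>Boundary points are written as complex numbers x0 + iy; a point iy (y<0) of the
  slit is ambiguous, so a prime end is determined by the point together with the side
  from which it is seen.  For the LEFT boundary the slit points are the prime ends 0^+ + iy
  (seen from Re z > 0); for the RIGHT boundary they are 0^- + iy (seen from Re z < 0).\<close>
definition left_region :: "complex \<Rightarrow> complex set" where
  "left_region p = (if Re p = 0 then {z \<in> S_slit. 0 < Re z} else S_slit)"

definition right_region :: "complex \<Rightarrow> complex set" where
  "right_region p = (if Re p = 0 then {z \<in> S_slit. Re z < 0} else S_slit)"

definition bval :: "(complex \<Rightarrow> complex set) \<Rightarrow> (complex \<Rightarrow> complex) \<Rightarrow> complex \<Rightarrow> complex" where
  "bval R f p = Lim (at p within R p) f"

definition left_boundary_segment :: "complex \<Rightarrow> complex \<Rightarrow> bool" where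
  "left_boundary_segment a b \<longleftrightarrow>
     (Re a = - 1/2 \<and> Re b = - 1/2) \<or> (Re a = 0 \<and> Re b = 0 \<and> Im a < 0 \<and> Im b < 0)"

definition right_boundary_segment :: "complex \<Rightarrow> complex \<Rightarrow> bool" where
  "right_boundary_segment a b \<longleftrightarrow>
     (Re a = 1/2 \<and> Re b = 1/2) \<or> (Re a = 0 \<and> Re b = 0 \<and> Im a < 0 \<and> Im b < 0)"

definition extends_continuously ::
  "(complex \<Rightarrow> complex) \<Rightarrow> (complex \<Rightarrow> complex) \<Rightarrow> (complex \<Rightarrow> complex set) \<Rightarrow> complex \<Rightarrow> complex \<Rightarrow> bool" where
  "extends_continuously K1 KB R a b \<longleftrightarrow>
     continuous_on (closed_segment a b) KB \<and>
     (\<forall>p\<in>closed_segment a b. (K1 \<longlongrightarrow> KB p) (at p within R p))"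

text \<open>The four kernels, as functions of the values k_j = K_j(z_j), s_j = sqrt(phi'(z_j)),
  f_j = phi(z_j).\<close>
definition Kcc :: "complex \<Rightarrow> complex \<Rightarrow> complex \<Rightarrow> complex \<Rightarrow> complex \<Rightarrow> complex \<Rightarrow> complex" where
  "Kcc k1 s1 f1 k2 s2 f2 = k1 * s1 * (k2 * s2) / (f1 - f2)"
definition Kcb :: "complex \<Rightarrow> complex \<Rightarrow> complex \<Rightarrow> complex \<Rightarrow> complex \<Rightarrow> complex \<Rightarrow> complex" where
  "Kcb k1 s1 f1 k2 s2 f2 = k1 * s1 * cnj (k2 * s2) / (f1 - cnj f2)"
definition Kbc :: "complex \<Rightarrow> complex \<Rightarrow> complex \<Rightarrow> complex \<Rightarrow> complex \<Rightarrow> complex \<Rightarrow> complex" where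
  "Kbc k1 s1 f1 k2 s2 f2 = cnj (k1 * s1) * (k2 * s2) / (cnj f1 - f2)"
definition Kbb :: "complex \<Rightarrow> complex \<Rightarrow> complex \<Rightarrow> complex \<Rightarrow> complex \<Rightarrow> complex \<Rightarrow> complex" where
  "Kbb k1 s1 f1 k2 s2 f2 = cnj (k1 * s1) * cnj (k2 * s2) / (cnj f1 - cnj f2)"

definition has_dz_dzbar_integral ::
  "(complex \<Rightarrow> complex) \<Rightarrow> (complex \<Rightarrow> complex) \<Rightarrow> complex \<Rightarrow> complex \<Rightarrow> complex \<Rightarrow> bool" where
  "has_dz_dzbar_integral F G a b I \<longleftrightarrow>
     ((\<lambda>t. F (linepath a b t) * (b - a) + G (linepath a b t) * cnj (b - a)) has_integral I) {0..1}"

end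

theory Submission
  imports Defs
begin

(* On both boundary arcs of S_slit the map phi is real-valued, and phi' has constant phase there:
   phi' lies in i*[0,oo) on the left boundary and in -i*[0,oo) on the right one.  The arcs are
   vertical, so dz lies in i*R, and with K1 in e^(-i pi/4) R (resp. e^(i pi/4) R) the product
   X = K1 sqrt(phi') dz is purely imaginary.  As phi(z1) is real, the dz and d(conj z1) terms of each
   kernel pair add up to a multiple of X + conj X = 0: the integrand vanishes identically.
   The boundary values come from phi(z) = (i/2) sqrt(e^(-2 pi i z) - 1): e^(-2 pi i z) maps each side
   of the slit into an open half-plane, on whose closure the square root has a continuous branch.
   The given branch of sqrt(phi') has boundary values because a continuous square root of a
   function with a nonzero limit has a limit itself, by connectedness of the domain. *)

lemma connected_square_root_sign:
  fixes f :: "'a::topological_space \<Rightarrow> complex"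
  assumes "connected C" "continuous_on C f" "D \<noteq> 0"
    and close: "\<forall>z\<in>C. norm ((f z)\<^sup>2 - D) < norm D"
  obtains s where "s\<^sup>2 = D" "\<forall>z\<in>C. norm (f z - s) < norm s"
proof -
  define r where "r = norm (csqrt D)"
  have r: "0 < r" "r * r = norm D"
    using \<open>D \<noteq> 0\<close> by (simp_all add: r_def norm_mult[symmetric] power2_eq_square[symmetric])
  have factor: "norm (w - s) * norm (w + s) = norm (w\<^sup>2 - D)" if "s\<^sup>2 = D" for w s
    using that by (simp add: norm_mult[symmetric] power2_eq_square algebra_simps)
  have "f ` C \<subseteq> ball (csqrt D) r \<union> ball (- csqrt D) r"
  proof
    fix w assume "w \<in> f ` C"
    then have "norm (w - csqrt D) * norm (w + csqrt D) < r * r"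
      using close factor[of "csqrt D"] r by auto
    then have "norm (w - csqrt D) < r \<or> norm (w + csqrt D) < r"
      using mult_mono[of r "norm (w - csqrt D)" r "norm (w + csqrt D)"] r by force
    then show "w \<in> ball (csqrt D) r \<union> ball (- csqrt D) r"
      by (auto simp: dist_norm norm_minus_commute simp flip: diff_minus_eq_add)
  qed
  moreover have "ball (csqrt D) r \<inter> ball (- csqrt D) r = {}"
  proof -
    have "2 * r \<le> dist (csqrt D) w + dist (- csqrt D) w" for w
      using norm_triangle_ineq[of "csqrt D - w" "w + csqrt D"]
      by (simp add: r_def norm_mult dist_norm norm_minus_commute[of "- csqrt D"] add.commute)
    then show ?thesis
      unfolding disjoint_iff mem_ball by (smt (verit))
  qed
  moreover have "connected (f ` C)"
    using assms(1,2) by (rule connected_continuous_image[rotated])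
  ultimately have "f ` C \<subseteq> ball (csqrt D) r \<or> f ` C \<subseteq> ball (- csqrt D) r"
    using connectedD[of "f ` C" "ball (csqrt D) r" "ball (- csqrt D) r"] by blast
  then show ?thesis
  proof
    assume "f ` C \<subseteq> ball (csqrt D) r"
    then show ?thesis
      by (intro that[of "csqrt D"]) (auto simp: r_def dist_norm norm_minus_commute)
  next
    assume "f ` C \<subseteq> ball (- csqrt D) r"
    then show ?thesis
      by (intro that[of "- csqrt D"])
        (auto simp: r_def dist_norm norm_minus_commute simp flip: diff_minus_eq_add)
  qed
qed

lemma tendsto_square_root:
  fixes f :: "'a::real_normed_vector \<Rightarrow> complex"
  assumes "convex A" "p \<notin> A" "continuous_on A f"
    and lim: "((\<lambda>z. (f z)\<^sup>2) \<longlongrightarrow> D) (at p within A)"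
  obtains s where "s\<^sup>2 = D" "(f \<longlongrightarrow> s) (at p within A)"
proof (cases "D = 0")
  case True
  have "((\<lambda>z. sqrt (norm ((f z)\<^sup>2))) \<longlongrightarrow> sqrt (norm D)) (at p within A)"
    by (intro tendsto_intros lim)
  then have "(f \<longlongrightarrow> 0) (at p within A)"
    using True by (simp add: norm_power tendsto_norm_zero_iff)
  then show ?thesis
    using True by (intro that) auto
next
  case False
  then have "\<forall>\<^sub>F z in at p within A. dist ((f z)\<^sup>2) D < norm D"
    using lim by (simp add: tendsto_iff)
  then obtain d where "d > 0"
    and near: "\<And>z. z \<in> A \<Longrightarrow> dist z p < d \<Longrightarrow> norm ((f z)\<^sup>2 - D) < norm D"
    using \<open>p \<notin> A\<close> by (force simp: eventually_at dist_norm)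
  define C where "C = A \<inter> ball p d"
  have "connected C"
    unfolding C_def using \<open>convex A\<close> by (intro convex_connected convex_Int convex_ball)
  moreover have "continuous_on C f"
    unfolding C_def using assms(3) by (rule continuous_on_subset) auto
  ultimately obtain s where s: "s\<^sup>2 = D" "\<forall>z\<in>C. norm (f z - s) < norm s"
    using connected_square_root_sign[of C f D] False near
    by (auto simp: C_def dist_commute)
  have "s \<noteq> 0" using s(1) False by auto
  have "\<forall>\<^sub>F z in at p within A. norm (f z - s) \<le> norm ((f z)\<^sup>2 - D) / norm s"
    using \<open>d > 0\<close> unfolding eventually_at
  proof (intro exI[of _ d] conjI ballI impI)
    fix z assume "z \<in> A" "z \<noteq> p \<and> dist z p < d"
    then have "norm (f z - s) < norm s"
      using s(2) by (auto simp: C_def dist_commute)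
    moreover have "2 * norm s \<le> norm (f z + s) + norm (f z - s)"
      using norm_triangle_ineq4[of "f z + s" "f z - s"] by (simp add: norm_mult)
    ultimately have "norm s \<le> norm (f z + s)" by linarith
    moreover have "norm ((f z)\<^sup>2 - D) = norm (f z - s) * norm (f z + s)"
      using s(1) by (simp add: norm_mult[symmetric] power2_eq_square algebra_simps)
    ultimately have "norm (f z - s) * norm s \<le> norm ((f z)\<^sup>2 - D)"
      by (simp add: mult_left_mono)
    then show "norm (f z - s) \<le> norm ((f z)\<^sup>2 - D) / norm s"
      using \<open>s \<noteq> 0\<close> by (simp add: field_simps)
  qed
  moreover have "((\<lambda>z. norm ((f z)\<^sup>2 - D) / norm s) \<longlongrightarrow> 0) (at p within A)"
    using lim by (intro tendsto_divide_zero tendsto_norm_zero) (simp add: LIM_zero)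
  ultimately have "((\<lambda>z. f z - s) \<longlongrightarrow> 0) (at p within A)"
    by (rule Lim_null_comparison)
  then show ?thesis
    using s(1) by (intro that) (auto simp: LIM_zero_iff)
qed

definition exp_neg_2pi_i :: "complex \<Rightarrow> complex" where
  "exp_neg_2pi_i z = exp (- 2 * of_real pi * \<i> * z)"

definition half_strip :: "real \<Rightarrow> complex set" where
  "half_strip \<sigma> = {z. 0 < \<sigma> * Re z \<and> \<sigma> * Re z < 1/2}"

(* For \<sigma> = -1 (resp. 1): the continuous extension of csqrt from the upper (resp. lower) half-plane
   to its closure. *)
definition csqrt_branch :: "real \<Rightarrow> complex \<Rightarrow> complex" where
  "csqrt_branch \<sigma> w =
     of_real (sqrt ((norm w + Re w) / 2)) - \<sigma> * \<i> * of_real (sqrt ((norm w - Re w) / 2))"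

lemma phi_eq: "phi z = \<i> / 2 * csqrt (exp_neg_2pi_i z - 1)"
  by (simp add: phi_def exp_neg_2pi_i_def)

lemma Re_exp_neg_2pi_i: "Re (exp_neg_2pi_i z) = exp (2 * pi * Im z) * cos (2 * pi * Re z)"
  by (simp add: exp_neg_2pi_i_def Re_exp)

lemma Im_exp_neg_2pi_i: "Im (exp_neg_2pi_i z) = - exp (2 * pi * Im z) * sin (2 * pi * Re z)"
  by (simp add: exp_neg_2pi_i_def Im_exp)

lemma sign_Im_exp_neg_2pi_i_half_strip:
  assumes "\<sigma> \<in> {-1, 1}" "z \<in> half_strip \<sigma>"
  shows "\<sigma> * Im (exp_neg_2pi_i z) < 0"
proof -
  have "0 < 2 * pi * (\<sigma> * Re z)" "2 * pi * (\<sigma> * Re z) < pi"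
    using assms(2) by (simp_all add: half_strip_def)
  then have "0 < sin (2 * pi * (\<sigma> * Re z))"
    by (rule sin_gt_zero)
  moreover have "\<sigma> * sin (2 * pi * Re z) = sin (2 * pi * (\<sigma> * Re z))"
    using assms(1) by auto
  ultimately show ?thesis
    by (simp add: Im_exp_neg_2pi_i) (metis mult.left_commute mult_pos_pos exp_gt_zero)
qed

lemma csqrt_eq_csqrt_branch:
  assumes "\<sigma> \<in> {-1, 1}" "\<sigma> * Im w < 0"
  shows "csqrt w = csqrt_branch \<sigma> w"
  using assms by (auto simp: complex_eq_iff csqrt_branch_def mult_less_0_iff)

lemma csqrt_branch_of_neg_real: "x < 0 \<Longrightarrow> csqrt_branch \<sigma> (of_real x) = - \<sigma> * \<i> * sqrt (- x)"
  by (simp add: csqrt_branch_def)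

lemma isCont_csqrt_branch: "isCont (csqrt_branch \<sigma>) w"
  unfolding csqrt_branch_def by (intro continuous_intros isCont_Re) auto

lemma deriv_phi:
  assumes "Im (exp_neg_2pi_i z) \<noteq> 0"
  shows "deriv phi z = pi * exp_neg_2pi_i z / (2 * csqrt (exp_neg_2pi_i z - 1))"
proof (rule DERIV_imp_deriv)
  have "exp_neg_2pi_i z - 1 \<notin> \<real>\<^sub>\<le>\<^sub>0"
    using assms by (auto simp: complex_nonpos_Reals_iff)
  then show "(phi has_field_derivative pi * exp_neg_2pi_i z / (2 * csqrt (exp_neg_2pi_i z - 1))) (at z)"
    unfolding phi_eq[abs_def] exp_neg_2pi_i_def
    by (auto intro!: derivative_eq_intros simp: field_simps)
qed

lemma tendsto_phi_half_strip:
  assumes \<sigma>: "\<sigma> \<in> {-1, 1}" and p: "exp_neg_2pi_i p = of_real e" "e < 1"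
  shows "(phi \<longlongrightarrow> of_real (\<sigma> * sqrt (1 - e) / 2)) (at p within half_strip \<sigma>)"
    and "(deriv phi \<longlongrightarrow> \<i> * of_real (\<sigma> * pi * e / (2 * sqrt (1 - e)))) (at p within half_strip \<sigma>)"
proof -
  define g where "g z = csqrt_branch \<sigma> (exp_neg_2pi_i z - 1)" for z
  have "isCont g p"
    unfolding g_def exp_neg_2pi_i_def
    by (rule continuous_at_compose[unfolded o_def, OF _ isCont_csqrt_branch]) (intro continuous_intros)
  then have g_lim: "(g \<longlongrightarrow> g p) (at p within half_strip \<sigma>)"
    by (simp add: isCont_def tendsto_within_subset[of _ _ _ UNIV])
  have g_p: "g p = - \<sigma> * \<i> * sqrt (1 - e)"
    using csqrt_branch_of_neg_real[of "e - 1" \<sigma>] p by (simp add: g_def)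
  have on_strip: "\<forall>\<^sub>F z in at p within half_strip \<sigma>. \<i> / 2 * g z = phi z \<and>
      pi * exp_neg_2pi_i z / (2 * g z) = deriv phi z"
    unfolding eventually_at_filter
  proof (intro always_eventually allI impI)
    fix z assume "z \<in> half_strip \<sigma>"
    then have "\<sigma> * Im (exp_neg_2pi_i z - 1) < 0"
      using sign_Im_exp_neg_2pi_i_half_strip[OF \<sigma>] by simp
    moreover from this have "Im (exp_neg_2pi_i z) \<noteq> 0" by auto
    ultimately show "\<i> / 2 * g z = phi z \<and> pi * exp_neg_2pi_i z / (2 * g z) = deriv phi z"
      using csqrt_eq_csqrt_branch[OF \<sigma>] by (simp add: g_def phi_eq deriv_phi)
  qed
  have "((\<lambda>z. \<i> / 2 * g z) \<longlongrightarrow> of_real (\<sigma> * sqrt (1 - e) / 2)) (at p within half_strip \<sigma>)"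
  proof -
    have "\<i> / 2 * g p = of_real (\<sigma> * sqrt (1 - e) / 2)"
      using g_p by (simp add: field_simps)
    then show ?thesis
      using tendsto_mult_left[OF g_lim, of "\<i> / 2"] by simp
  qed
  moreover have "((\<lambda>z. pi * exp_neg_2pi_i z / (2 * g z)) \<longlongrightarrow> \<i> * of_real (\<sigma> * pi * e / (2 * sqrt (1 - e))))
      (at p within half_strip \<sigma>)"
  proof -
    have "((\<lambda>z. pi * exp_neg_2pi_i z / (2 * g z)) \<longlongrightarrow> pi * exp_neg_2pi_i p / (2 * g p))
        (at p within half_strip \<sigma>)"
      using g_lim g_p \<open>e < 1\<close> \<sigma> unfolding exp_neg_2pi_i_def
      by (intro tendsto_intros) auto
    moreover have "pi * exp_neg_2pi_i p / (2 * g p) = \<i> * of_real (\<sigma> * pi * e / (2 * sqrt (1 - e)))"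
      using g_p p \<sigma> by (auto simp: field_simps)
    ultimately show ?thesis by simp
  qed
  ultimately show "(phi \<longlongrightarrow> of_real (\<sigma> * sqrt (1 - e) / 2)) (at p within half_strip \<sigma>)"
    and "(deriv phi \<longlongrightarrow> \<i> * of_real (\<sigma> * pi * e / (2 * sqrt (1 - e)))) (at p within half_strip \<sigma>)"
    using on_strip by (auto elim!: Lim_transform_eventually elim: eventually_mono)
qed

lemma convex_half_strip: "convex (half_strip \<sigma>)"
proof -
  have "half_strip \<sigma> = {z. inner (of_real \<sigma>) z > 0} \<inter> {z. inner (of_real \<sigma>) z < 1/2}"
    by (auto simp: half_strip_def inner_complex_def)
  then show ?thesis
    by (metis convex_Int convex_halfspace_gt convex_halfspace_lt)
qed

lemma islimpt_half_strip:
  assumes "\<sigma> \<in> {-1, 1}" "Re p = 0 \<or> \<sigma> * Re p = 1/2"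
  shows "p islimpt half_strip \<sigma>"
proof -
  define c :: complex where "c = of_real (\<sigma> / 4)"
  have "\<sigma> * Re c = 1/4"
    using assms(1) by (auto simp: c_def)
  then have "c \<noteq> p"
    using assms by auto
  have p_bounds: "0 \<le> \<sigma> * Re p" "\<sigma> * Re p \<le> 1/2"
    using assms(2) by auto
  have "open_segment p c \<subseteq> half_strip \<sigma> - {p}"
  proof
    fix z assume "z \<in> open_segment p c"
    then obtain u where u: "0 < u" "u < 1" "z = (1 - u) *\<^sub>R p + u *\<^sub>R c"
      by (auto simp: in_segment)
    then have "Re z = (1 - u) * Re p + u * Re c"
      by simp
    then have "\<sigma> * Re z = (1 - u) * (\<sigma> * Re p) + u * (\<sigma> * Re c)"
      by (simp only: ring_distribs mult.left_commute)
    then have "\<sigma> * Re z = (1 - u) * (\<sigma> * Re p) + u / 4"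
      using \<open>\<sigma> * Re c = 1/4\<close> by simp
    moreover have "(1 - u) * (\<sigma> * Re p) \<le> (1 - u) / 2"
      using u p_bounds by (simp add: mult_left_mono)
    moreover have "0 \<le> (1 - u) * (\<sigma> * Re p)"
      using u p_bounds by simp
    ultimately have "z \<in> half_strip \<sigma>"
      using u(1,2) unfolding half_strip_def mem_Collect_eq by argo
    moreover have "z \<noteq> p"
      using \<open>z \<in> open_segment p c\<close> by (simp add: open_segment_def)
    ultimately show "z \<in> half_strip \<sigma> - {p}" by simp
  qed
  then have "closed_segment p c \<subseteq> closure (half_strip \<sigma> - {p})"
    using closure_mono[of "open_segment p c"] \<open>c \<noteq> p\<close> by simp
  then show ?thesis
    by (auto simp: islimpt_in_closure)
qed

lemma half_strip_subset_S_slit: "\<sigma> \<in> {-1, 1} \<Longrightarrow> half_strip \<sigma> \<subseteq> S_slit"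
  by (auto simp: half_strip_def S_slit_def)

lemma half_strip_eq_S_slit_side:
  "half_strip 1 = {z \<in> S_slit. 0 < Re z}" "half_strip (-1) = {z \<in> S_slit. Re z < 0}"
  by (auto simp: half_strip_def S_slit_def)

lemma at_within_S_slit_edge:
  assumes "\<sigma> \<in> {-1, 1}" "\<sigma> * Re p = 1/2"
  shows "at p within S_slit = at p within half_strip \<sigma>"
proof (rule at_within_nhd[of p "ball p (1/2)"])
  have "z \<in> S_slit \<longleftrightarrow> z \<in> half_strip \<sigma>" if "z \<in> ball p (1/2)" for z
  proof -
    have "\<bar>Re z - Re p\<bar> < 1/2"
      using that abs_Re_le_cmod[of "z - p"] by (simp add: dist_norm norm_minus_commute)
    then show ?thesis
      using assms by (auto simp: S_slit_def half_strip_def abs_if split: if_splits)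
  qed
  then show "S_slit \<inter> ball p (1/2) - {p} = half_strip \<sigma> \<inter> ball p (1/2) - {p}"
    by blast
qed auto

lemma exp_neg_2pi_i_slit: "Re p = 0 \<Longrightarrow> exp_neg_2pi_i p = of_real (exp (2 * pi * Im p))"
  by (simp add: complex_eq_iff Re_exp_neg_2pi_i Im_exp_neg_2pi_i)

lemma exp_neg_2pi_i_edge:
  assumes "\<bar>Re p\<bar> = 1/2"
  shows "exp_neg_2pi_i p = of_real (- exp (2 * pi * Im p))"
proof -
  have "Re p = 1/2 \<or> Re p = - 1/2"
    using assms by (auto simp: abs_eq_iff)
  then have "2 * pi * Re p = pi \<or> 2 * pi * Re p = - pi"
    by (elim disjE) simp_all
  then have "cos (2 * pi * Re p) = -1 \<and> sin (2 * pi * Re p) = 0"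
    by (elim disjE) (simp_all only: cos_pi sin_pi cos_minus sin_minus minus_zero)
  then show ?thesis
    by (simp add: complex_eq_iff Re_exp_neg_2pi_i Im_exp_neg_2pi_i)
qed

lemma Lim_boundary_half_strip:
  assumes \<sigma>: "\<sigma> \<in> {-1, 1}" and p: "Re p = 0 \<or> \<sigma> * Re p = 1/2"
    and e: "exp_neg_2pi_i p = of_real e" "e < 1"
    and sq: "continuous_on (half_strip \<sigma>) sq" "\<forall>z\<in>half_strip \<sigma>. (sq z)\<^sup>2 = deriv phi z"
  shows "Lim (at p within half_strip \<sigma>) phi \<in> \<real>"
    and "(Lim (at p within half_strip \<sigma>) sq)\<^sup>2 = \<i> * of_real (\<sigma> * pi * e / (2 * sqrt (1 - e)))"
proof -
  have "\<not> trivial_limit (at p within half_strip \<sigma>)"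
    using islimpt_half_strip[OF \<sigma> p] by (simp add: trivial_limit_within)
  note Lim = tendsto_Lim[OF this]
  show "Lim (at p within half_strip \<sigma>) phi \<in> \<real>"
    using Lim[OF tendsto_phi_half_strip(1)[OF \<sigma> e]] by (simp only: Reals_of_real)
  have "((\<lambda>z. (sq z)\<^sup>2) \<longlongrightarrow> \<i> * of_real (\<sigma> * pi * e / (2 * sqrt (1 - e)))) (at p within half_strip \<sigma>)"
    using tendsto_phi_half_strip(2)[OF \<sigma> e]
    by (rule Lim_transform_eventually) (simp add: eventually_at_filter sq(2))
  moreover have "p \<notin> half_strip \<sigma>"
    using p by (auto simp: half_strip_def)
  ultimately obtain s where s: "s\<^sup>2 = \<i> * of_real (\<sigma> * pi * e / (2 * sqrt (1 - e)))"
    "(sq \<longlongrightarrow> s) (at p within half_strip \<sigma>)"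
    using tendsto_square_root[OF convex_half_strip _ sq(1)] by blast
  then show "(Lim (at p within half_strip \<sigma>) sq)\<^sup>2 = \<i> * of_real (\<sigma> * pi * e / (2 * sqrt (1 - e)))"
    using Lim[OF s(2)] by (simp only:)
qed

lemma bval_boundary_half_strip:
  assumes \<sigma>: "\<sigma> \<in> {-1, 1}" and side: "at p within R p = at p within half_strip \<sigma>"
    and p: "Re p = 0 \<or> \<sigma> * Re p = 1/2"
    and e: "exp_neg_2pi_i p = of_real e" "e < 1"
    and sq_cont: "continuous_on S_slit sq" and sq_branch: "\<forall>z\<in>S_slit. (sq z)\<^sup>2 = deriv phi z"
  shows "bval R phi p \<in> \<real>"
    and "(bval R sq p)\<^sup>2 = \<i> * of_real (\<sigma> * pi * e / (2 * sqrt (1 - e)))"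
proof -
  have "continuous_on (half_strip \<sigma>) sq" "\<forall>z\<in>half_strip \<sigma>. (sq z)\<^sup>2 = deriv phi z"
    using half_strip_subset_S_slit[OF \<sigma>] sq_cont sq_branch by (auto intro: continuous_on_subset)
  then show "bval R phi p \<in> \<real>"
    and "(bval R sq p)\<^sup>2 = \<i> * of_real (\<sigma> * pi * e / (2 * sqrt (1 - e)))"
    unfolding bval_def side using Lim_boundary_half_strip[OF \<sigma> p e] by auto
qed

lemma left_boundary_values:
  assumes sq_cont: "continuous_on S_slit sq" and sq_branch: "\<forall>z\<in>S_slit. (sq z)\<^sup>2 = deriv phi z"
    and p: "Re p = - 1/2 \<or> Re p = 0 \<and> Im p < 0"
  shows "bval left_region phi p \<in> \<real> \<and> (\<exists>c\<ge>0. (bval left_region sq p)\<^sup>2 = \<i> * of_real c)"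
proof -
  obtain \<sigma> e where \<sigma>: "\<sigma> \<in> {-1, 1}" and side: "at p within left_region p = at p within half_strip \<sigma>"
    and p': "Re p = 0 \<or> \<sigma> * Re p = 1/2" and e: "exp_neg_2pi_i p = of_real e" "e < 1"
    and sign: "0 \<le> \<sigma> * e"
  proof (cases "Re p = 0")
    case True
    then show thesis
      using p exp_neg_2pi_i_slit[OF True]
      by (intro that[of 1 "exp (2 * pi * Im p)"])
        (auto simp: left_region_def half_strip_eq_S_slit_side mult_pos_neg)
  next
    case False
    then show thesis
      using p at_within_S_slit_edge[of "-1" p] exp_neg_2pi_i_edge[of p]
      by (intro that[of "-1" "- exp (2 * pi * Im p)"])
        (auto simp: left_region_def intro: less_trans[OF _ exp_gt_zero])
  qed
  have "0 \<le> pi * (\<sigma> * e) / (2 * sqrt (1 - e))"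
    using sign e(2) by simp
  then have "0 \<le> \<sigma> * pi * e / (2 * sqrt (1 - e))"
    by (simp only: mult_ac)
  then show ?thesis
    using bval_boundary_half_strip[where R = left_region, OF \<sigma> side p' e sq_cont sq_branch] by blast
qed

lemma right_boundary_values:
  assumes sq_cont: "continuous_on S_slit sq" and sq_branch: "\<forall>z\<in>S_slit. (sq z)\<^sup>2 = deriv phi z"
    and p: "Re p = 1/2 \<or> Re p = 0 \<and> Im p < 0"
  shows "bval right_region phi p \<in> \<real> \<and> (\<exists>c\<ge>0. (bval right_region sq p)\<^sup>2 = - \<i> * of_real c)"
proof -
  obtain \<sigma> e where \<sigma>: "\<sigma> \<in> {-1, 1}" and side: "at p within right_region p = at p within half_strip \<sigma>"
    and p': "Re p = 0 \<or> \<sigma> * Re p = 1/2" and e: "exp_neg_2pi_i p = of_real e" "e < 1"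
    and sign: "\<sigma> * e \<le> 0"
  proof (cases "Re p = 0")
    case True
    then show thesis
      using p exp_neg_2pi_i_slit[OF True]
      by (intro that[of "-1" "exp (2 * pi * Im p)"])
        (auto simp: right_region_def half_strip_eq_S_slit_side mult_pos_neg)
  next
    case False
    then show thesis
      using p at_within_S_slit_edge[of 1 p] exp_neg_2pi_i_edge[of p]
      by (intro that[of 1 "- exp (2 * pi * Im p)"])
        (auto simp: right_region_def intro: less_trans[OF _ exp_gt_zero])
  qed
  have "pi * (\<sigma> * e) / (2 * sqrt (1 - e)) \<le> 0"
    using sign e(2) by (simp add: divide_nonpos_pos mult_nonneg_nonpos)
  then have "0 \<le> - (\<sigma> * pi * e / (2 * sqrt (1 - e)))"
    by (simp only: mult_ac neg_0_le_iff_le)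
  then show ?thesis
    using bval_boundary_half_strip[where R = right_region, OF \<sigma> side p' e sq_cont sq_branch]
    by (intro conjI exI[of _ "- (\<sigma> * pi * e / (2 * sqrt (1 - e)))"]) simp_all
qed

lemma Re_eq_0_if_square_nonpos:
  fixes X :: complex
  assumes "X\<^sup>2 = - of_real u" "0 \<le> u"
  shows "Re X = 0"
proof (rule ccontr)
  assume "Re X \<noteq> 0"
  moreover have "2 * Re X * Im X = 0"
    using arg_cong[OF assms(1), of Im] by (simp add: Im_power2)
  ultimately have "(Re X)\<^sup>2 = - u"
    using arg_cong[OF assms(1), of Re] by (simp add: Re_power2)
  with \<open>Re X \<noteq> 0\<close> \<open>0 \<le> u\<close> show False
    by (smt (verit) zero_less_power2)
qed

lemma Re_mult_eq_0_if_aligned: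
  assumes "k = cis \<theta> * of_real r" "s\<^sup>2 = cis (- 2 * \<theta>) * of_real c" "0 \<le> c" "Re d = 0"
  shows "Re (k * s * d) = 0"
proof (rule Re_eq_0_if_square_nonpos)
  have "d\<^sup>2 = - of_real ((Im d)\<^sup>2)"
    using \<open>Re d = 0\<close> by (simp add: complex_eq_iff power2_eq_square)
  moreover have "(cis \<theta>)\<^sup>2 * cis (- 2 * \<theta>) = 1"
    by (simp add: power2_eq_square cis_mult)
  then have "k\<^sup>2 * s\<^sup>2 = of_real (r\<^sup>2 * c)"
    using assms(1,2) by (simp add: power_mult_distrib mult_ac)
  ultimately show "(k * s * d)\<^sup>2 = - of_real (r\<^sup>2 * c * (Im d)\<^sup>2)"
    by (simp add: power_mult_distrib)
  show "0 \<le> r\<^sup>2 * c * (Im d)\<^sup>2"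
    using \<open>0 \<le> c\<close> by simp
qed

lemma kernel_pairs_cancel:
  assumes "f \<in> \<real>" "Re (k * s * d) = 0"
  shows "Kcc k s f k2 s2 f2 * d + Kbc k s f k2 s2 f2 * cnj d = 0"
    and "Kcb k s f k2 s2 f2 * d + Kbb k s f k2 s2 f2 * cnj d = 0"
proof -
  have real: "cnj f = f"
    using \<open>f \<in> \<real>\<close> by (simp add: Reals_cnj_iff)
  have imag: "k * s * d + cnj (k * s * d) = 0"
    unfolding complex_add_cnj using \<open>Re (k * s * d) = 0\<close> by (simp only:) simp
  have "Kcc k s f k2 s2 f2 * d + Kbc k s f k2 s2 f2 * cnj d
      = k2 * s2 / (f - f2) * (k * s * d + cnj (k * s * d))"
    using real by (simp add: Kcc_def Kbc_def add_divide_distrib algebra_simps)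
  then show "Kcc k s f k2 s2 f2 * d + Kbc k s f k2 s2 f2 * cnj d = 0"
    using imag by simp
  have "Kcb k s f k2 s2 f2 * d + Kbb k s f k2 s2 f2 * cnj d
      = cnj (k2 * s2) / (f - cnj f2) * (k * s * d + cnj (k * s * d))"
    using real by (simp add: Kcb_def Kbb_def add_divide_distrib algebra_simps)
  then show "Kcb k s f k2 s2 f2 * d + Kbb k s f k2 s2 f2 * cnj d = 0"
    using imag by simp
qed

lemma has_dz_dzbar_integral_kernels_eq_0:
  assumes "\<forall>p\<in>closed_segment a b. f p \<in> \<real> \<and> Re (k p * s p * (b - a)) = 0"
  shows "has_dz_dzbar_integral (\<lambda>p. Kcc (k p) (s p) (f p) k2 s2 f2) (\<lambda>p. Kbc (k p) (s p) (f p) k2 s2 f2) a b 0"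
    and "has_dz_dzbar_integral (\<lambda>p. Kcb (k p) (s p) (f p) k2 s2 f2) (\<lambda>p. Kbb (k p) (s p) (f p) k2 s2 f2) a b 0"
proof -
  have vanish:
    "Kcc (k p) (s p) (f p) k2 s2 f2 * (b - a) + Kbc (k p) (s p) (f p) k2 s2 f2 * cnj (b - a) = 0"
    "Kcb (k p) (s p) (f p) k2 s2 f2 * (b - a) + Kbb (k p) (s p) (f p) k2 s2 f2 * cnj (b - a) = 0"
    if "p \<in> closed_segment a b" for p
    using assms that kernel_pairs_cancel by blast+
  have on_segment: "linepath a b t \<in> closed_segment a b" if "t \<in> {0..1}" for t
    using that linepath_image_01 by blast
  show "has_dz_dzbar_integral (\<lambda>p. Kcc (k p) (s p) (f p) k2 s2 f2) (\<lambda>p. Kbc (k p) (s p) (f p) k2 s2 f2) a b 0"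
    and "has_dz_dzbar_integral (\<lambda>p. Kcb (k p) (s p) (f p) k2 s2 f2) (\<lambda>p. Kbb (k p) (s p) (f p) k2 s2 f2) a b 0"
    unfolding has_dz_dzbar_integral_def
    by (intro has_integral_eq[OF _ has_integral_0]; metis vanish on_segment)+
qed

lemma closed_segment_vertical:
  assumes "Re a = x" "Re b = x"
  shows "closed_segment a b \<subseteq> {z. Re z = x}"
    and "Im a < 0 \<Longrightarrow> Im b < 0 \<Longrightarrow> closed_segment a b \<subseteq> {z. Re z = x \<and> Im z < 0}"
proof -
  have "convex {z. Re z = x}"
    using convex_hyperplane[of "1::complex" x] by simp
  then show "closed_segment a b \<subseteq> {z. Re z = x}"
    using assms by (intro closed_segment_subset) auto
  have "convex {z. Re z = x \<and> Im z < 0}"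
    using convex_Int[OF \<open>convex {z. Re z = x}\<close> convex_halfspace_Im_lt[of 0]]
    by (simp add: Int_def)
  then show "Im a < 0 \<Longrightarrow> Im b < 0 \<Longrightarrow> closed_segment a b \<subseteq> {z. Re z = x \<and> Im z < 0}"
    using assms by (intro closed_segment_subset) auto
qed

lemma left_boundary_integrand_vanishes:
  assumes sq_cont: "continuous_on S_slit sq" and sq_branch: "\<forall>z\<in>S_slit. (sq z)\<^sup>2 = deriv phi z"
    and ab: "left_boundary_segment a b"
    and KB: "\<forall>p\<in>closed_segment a b. \<exists>r::real. KB p = cis (- pi/4) * of_real r"
  shows "\<forall>p\<in>closed_segment a b.
    bval left_region phi p \<in> \<real> \<and> Re (KB p * bval left_region sq p * (b - a)) = 0"
proof
  fix p assume p: "p \<in> closed_segment a b"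
  then have "Re p = - 1/2 \<or> Re p = 0 \<and> Im p < 0"
    using ab closed_segment_vertical[of a _ b] unfolding left_boundary_segment_def by blast
  then obtain c where "bval left_region phi p \<in> \<real>" "0 \<le> c"
    "(bval left_region sq p)\<^sup>2 = cis (- 2 * (- pi / 4)) * of_real c"
    using left_boundary_values[OF sq_cont sq_branch] by auto
  moreover obtain r where "KB p = cis (- pi/4) * of_real r"
    using KB p by blast
  moreover have "Re (b - a) = 0"
    using ab by (auto simp: left_boundary_segment_def)
  ultimately show "bval left_region phi p \<in> \<real> \<and> Re (KB p * bval left_region sq p * (b - a)) = 0"
    using Re_mult_eq_0_if_aligned by blast
qed

lemma right_boundary_integrand_vanishes:
  assumes sq_cont: "continuous_on S_slit sq" and sq_branch: "\<forall>z\<in>S_slit. (sq z)\<^sup>2 = deriv phi z"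
    and ab: "right_boundary_segment a b"
    and KB: "\<forall>p\<in>closed_segment a b. \<exists>r::real. KB p = cis (pi/4) * of_real r"
  shows "\<forall>p\<in>closed_segment a b.
    bval right_region phi p \<in> \<real> \<and> Re (KB p * bval right_region sq p * (b - a)) = 0"
proof
  fix p assume p: "p \<in> closed_segment a b"
  then have "Re p = 1/2 \<or> Re p = 0 \<and> Im p < 0"
    using ab closed_segment_vertical[of a _ b] unfolding right_boundary_segment_def by blast
  then obtain c where "bval right_region phi p \<in> \<real>" "0 \<le> c"
    "(bval right_region sq p)\<^sup>2 = cis (- 2 * (pi / 4)) * of_real c"
    using right_boundary_values[OF sq_cont sq_branch] by auto
  moreover obtain r where "KB p = cis (pi/4) * of_real r"
    using KB p by blast
  moreover have "Re (b - a) = 0"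
    using ab by (auto simp: right_boundary_segment_def)
  ultimately show "bval right_region phi p \<in> \<real> \<and> Re (KB p * bval right_region sq p * (b - a)) = 0"
    using Re_mult_eq_0_if_aligned by blast
qed

theorem lemma7p2:
  fixes K1 K2 sq :: "complex \<Rightarrow> complex" and z2 :: complex
  assumes sq_cont: "continuous_on S_slit sq"
    and sq_branch: "\<forall>z\<in>S_slit. (sq z)\<^sup>2 = deriv phi z"
    and z2: "z2 \<in> S_slit"
  shows
   "(\<forall>a b KB. left_boundary_segment a b \<and> extends_continuously K1 KB left_region a b \<and>
        (\<forall>p\<in>closed_segment a b. \<exists>r::real. KB p = cis (- pi/4) * of_real r) \<longrightarrow>
      has_dz_dzbar_integral
        (\<lambda>p. Kcc (KB p) (bval left_region sq p) (bval left_region phi p) (K2 z2) (sq z2) (phi z2))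
        (\<lambda>p. Kbc (KB p) (bval left_region sq p) (bval left_region phi p) (K2 z2) (sq z2) (phi z2))
        a b 0 \<and>
      has_dz_dzbar_integral
        (\<lambda>p. Kcb (KB p) (bval left_region sq p) (bval left_region phi p) (K2 z2) (sq z2) (phi z2))
        (\<lambda>p. Kbb (KB p) (bval left_region sq p) (bval left_region phi p) (K2 z2) (sq z2) (phi z2))
        a b 0)
  \<and> (\<forall>a b KB. right_boundary_segment a b \<and> extends_continuously K1 KB right_region a b \<and>
        (\<forall>p\<in>closed_segment a b. \<exists>r::real. KB p = cis (pi/4) * of_real r) \<longrightarrow>
      has_dz_dzbar_integral
        (\<lambda>p. Kcc (KB p) (bval right_region sq p) (bval right_region phi p) (K2 z2) (sq z2) (phi z2))
        (\<lambda>p. Kbc (KB p) (bval right_region sq p) (bval right_region phi p) (K2 z2) (sq z2) (phi z2))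
        a b 0 \<and>
      has_dz_dzbar_integral
        (\<lambda>p. Kcb (KB p) (bval right_region sq p) (bval right_region phi p) (K2 z2) (sq z2) (phi z2))
        (\<lambda>p. Kbb (KB p) (bval right_region sq p) (bval right_region phi p) (K2 z2) (sq z2) (phi z2))
        a b 0)"
  \<comment> \<open>The integrand vanishes pointwise.\<close>
  by (intro conjI allI impI has_dz_dzbar_integral_kernels_eq_0; elim conjE)
    (rule left_boundary_integrand_vanishes[OF sq_cont sq_branch]
      right_boundary_integrand_vanishes[OF sq_cont sq_branch]; assumption)+

end
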